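(* In the setting below (Algorithm 1), (i) truthful reporting is a Nash equilibrium: for every agent $i\in[m]$ and every strategy $f_i$, $$\mathbb E\big[L_i(\mathrm{id},\dots,\mathrm{id})\big]\le \mathbb E\big[L_i(f_i,(\mathrm{id})_{j\neq i})\big].$$ (ii) If moreover $\Pi$ is not degenerate, then "more data is strictly better": when all agents are truthful, for every agent $i$, every choice of sample sizes $(n_j)_{j\ne i}$ and all $n_i<n_i'$, the expected loss of agent $i$ when holding (and truthfully submitting) $n_i'$ points is strictly smaller than when holding $n_i$ points, the other agents' sample sizes being unchanged.
   Context: Setting (Algorithm 1). Fix $m\ge 2$ agents. A prior $\Pi$ is a probability distribution on the set of Borel probability distributions on $\mathbb{R}$. A random distribution $D\sim\Pi$ is drawn; conditionally on $D$, agent $i\in[m]$ holds a dataset $X_i=(X_{i,1},\dots,X_{i,n_i})$ whose entries are i.i.d. from $D$, independent across agents (one may regard $X_{i,1},X_{i,2},\dots$ as an infinite conditionally i.i.d. sequence of which the agent holds the first $n_i$). A strategy is a measurable map $f:\bigcup_{\ell\ge0}\mathbb{R}^\ell\to\bigcup_{\ell\ge0}\mathbb{R}^\ell$; agent $i$ submits $X_i'=f_i(X_i)$; the truthful strategy $\mathrm{id}$ is the identity. For a finite nonempty multiset $S\subset\mathbb R$ let $F_S(t)=\frac1{|S|}\sum_{s\in S}\mathbf 1\{s\le t\}$. For integers $k\ge0,r\ge1$ let $h_{k,r}:\mathbb R^{k+1}\to[0,1]$ be measurable such that whenever $D\sim\Pi$ and, conditionally on $D$, $Y_1,\dots,Y_k,T,Z_1,\dots,Z_r$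 are i.i.d. from $D$, one has $h_{k,r}(Y_1,\dots,Y_k,T)=\mathbb E[F_{\{Z_1,\dots,Z_r\}}(T)\mid Y_1,\dots,Y_k,T]$ a.s. Mechanism: for each agent $i$, let $X'_{-i}=\bigcup_{j\ne i}X'_j$ (multiset union, assumed to have at least 2 elements), pick $T_i$ uniformly at random from $X'_{-i}$ independently of everything else, set $Z_i=X'_{-i}\setminus\{T_i\}$, and define the loss $L_i=\big(h_{|X_i'|,|Z_i|}(X_i',T_i)-F_{Z_i}(T_i)\big)^2\in[0,1]$. $L_i(f_1,\dots,f_m)$ denotes the loss when agents use strategies $f_1,\dots,f_m$. Expectations are over $D\sim\Pi$, the data, and all randomness of mechanism and strategies. Degenerate prior: let $D\sim\Pi$ and, conditionally on $D$, $X_1,X_2,\dots,T,Z$ be i.i.d. from $D$. $\Pi$ is degenerate if for some $n\in\mathbb N$, $P(Z\le T\mid T,X_1,\dots,X_n)=P(Z\le T\mid T,X_1,\dots,X_{n+1})$ almost surely. *)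

theory Defs
  imports "HOL-Probability.Probability"
begin

text \<open>Measurable structure on finite real tuples (real lists): the disjoint union
  of the Borel sigma-algebras of the spaces R^l, l = 0,1,2,...\<close>
definition list_borel :: "real list measure" where
  "list_borel = sigma UNIV
     (\<Union>l. (\<lambda>A. {xs. length xs = l \<and> restrict (\<lambda>j. xs ! j) {..<l} \<in> A})
              ` sets (PiM {..<l} (\<lambda>_. (borel :: real measure))))"

definition ecdf :: "real list \<Rightarrow> real \<Rightarrow> real" where
  "ecdf S t = real (length (filter (\<lambda>s. s \<le> t) S)) / real (length S)"

text \<open>Generic "version of a conditional expectation" in the model where D ~ Q and,
  conditionally on D, the coordinates of omega are i.i.d. from D.
  g is a [0,1]-valued measurable function of the coordinates in I, and g of those
  coordinates satisfies the defining property of E[W | coordinates in I].\<close>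
definition is_cond_exp ::
  "real measure measure \<Rightarrow> nat set \<Rightarrow> ((nat \<Rightarrow> real) \<Rightarrow> real) \<Rightarrow> ((nat \<Rightarrow> real) \<Rightarrow> real) \<Rightarrow> bool" where
  "is_cond_exp Q I g W \<longleftrightarrow>
     g \<in> borel_measurable (PiM I (\<lambda>_. (borel :: real measure))) \<and>
     (\<forall>x. g x \<in> {0..1}) \<and>
     (\<forall>B \<in> sets (PiM I (\<lambda>_. (borel :: real measure))).
        (\<integral>D. (\<integral>\<omega>. indicator B (restrict \<omega> I) * g (restrict \<omega> I) \<partial>(PiM UNIV (\<lambda>_::nat. D))) \<partial>Q)
      = (\<integral>D. (\<integral>\<omega>. indicator B (restrict \<omega> I) * W \<omega> \<partial>(PiM UNIV (\<lambda>_::nat. D))) \<partial>Q))"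

definition is_prior :: "real measure measure \<Rightarrow> bool" where
  "is_prior Q \<longleftrightarrow> prob_space Q \<and> sets Q = sets (prob_algebra (borel :: real measure))"

text \<open>h k r : R^(k+1) -> [0,1] (applied to the list Y_1..Y_k,T) is measurable and
  h k r (Y,T) = E[F_Z(T) | Y,T] a.s., with Y = coordinates 0..k-1, T = coordinate k,
  Z = coordinates k+1..k+r.\<close>
definition valid_h :: "real measure measure \<Rightarrow> (nat \<Rightarrow> nat \<Rightarrow> real list \<Rightarrow> real) \<Rightarrow> bool" where
  "valid_h Q h \<longleftrightarrow> (\<forall>k r. r \<ge> 1 \<longrightarrow>
     is_cond_exp Q {..k} (\<lambda>x. h k r (map x [0..<Suc k]))
        (\<lambda>\<omega>. ecdf (map \<omega> [Suc k..<Suc k + r]) (\<omega> k)))"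

text \<open>Degenerate prior: T = coordinate 0, Z = coordinate 1, X_1, X_2, ... = coordinates 2, 3, ...
  For some n, P(Z \<le> T | T, X_1..X_n) = P(Z \<le> T | T, X_1..X_(n+1)) a.s.\<close>
definition degenerate :: "real measure measure \<Rightarrow> bool" where
  "degenerate Q \<longleftrightarrow> (\<exists>n g1 g2.
     is_cond_exp Q (insert 0 {2..<n+2}) g1 (\<lambda>\<omega>. indicator {x. x \<le> \<omega> 0} (\<omega> 1)) \<and>
     is_cond_exp Q (insert 0 {2..<n+3}) g2 (\<lambda>\<omega>. indicator {x. x \<le> \<omega> 0} (\<omega> 1)) \<and>
     (AE D in Q. AE \<omega> in PiM UNIV (\<lambda>_::nat. D).
        g1 (restrict \<omega> (insert 0 {2..<n+2})) = g2 (restrict \<omega> (insert 0 {2..<n+3}))))"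

definition sample :: "(nat \<times> nat \<Rightarrow> real) \<Rightarrow> nat \<Rightarrow> nat \<Rightarrow> real list" where
  "sample \<omega> j l = map (\<lambda>k. \<omega> (j, k)) [0..<l]"

text \<open>Expected (over T uniform in L) loss of an agent submitting Xi, when the other
  agents' pooled submissions are L: T = L!p with p uniform, Z = L without position p.\<close>
definition loss_given :: "(nat \<Rightarrow> nat \<Rightarrow> real list \<Rightarrow> real) \<Rightarrow> real list \<Rightarrow> real list \<Rightarrow> real" where
  "loss_given h Xi L =
     (\<Sum>p<length L. (h (length Xi) (length L - 1) (Xi @ [L ! p])
                       - ecdf (take p L @ drop (Suc p) L) (L ! p))\<^sup>2) / real (length L)"

definition others :: "nat \<Rightarrow> (nat \<Rightarrow> nat) \<Rightarrow> (nat \<Rightarrow> real list \<Rightarrow> real list) \<Rightarrow> nat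
                      \<Rightarrow> (nat \<times> nat \<Rightarrow> real) \<Rightarrow> real list" where
  "others m n f i \<omega> = concat (map (\<lambda>j. f j (sample \<omega> j (n j))) (filter (\<lambda>j. j \<noteq> i) [0..<m]))"

definition exp_loss :: "real measure measure \<Rightarrow> (nat \<Rightarrow> nat \<Rightarrow> real list \<Rightarrow> real) \<Rightarrow> nat
     \<Rightarrow> (nat \<Rightarrow> nat) \<Rightarrow> (nat \<Rightarrow> real list \<Rightarrow> real list) \<Rightarrow> nat \<Rightarrow> real" where
  "exp_loss Q h m n f i =
     (\<integral>D. (\<integral>\<omega>. loss_given h (f i (sample \<omega> i (n i))) (others m n f i \<omega>)
              \<partial>(PiM UNIV (\<lambda>_::nat \<times> nat. D))) \<partial>Q)"

end

theory Submission
  imports Defs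
begin

text \<open>
  Let P be the law of an infinite sequence drawn i.i.d. from D, where D is drawn from the
  prior. P is exchangeable, so each of the N possible choices of the test point T contributes
  equally to the expected loss, which is therefore the mean squared error of predicting
  W = F_Z(T) by a function of the agent's report and T. For the truthful report this function
  is the conditional expectation of W given the agent's data and T, and Pythagoras in L2 shows
  that any other report loses the squared distance to it. Placing the data of all sample sizes
  k <= b in one common layout of coordinates, the conditioning information grows with k, so
  the truthful loss decreases; the decrease from a to a + 1 points is the squared distance
  between the two conditional expectations, which vanishes only if the prior is degenerate.
\<close>

lemma abs_square_diff_le_one:
  fixes a b :: real
  assumes "a \<in> {0..1}" "b \<in> {0..1}"
  shows "\<bar>(a - b)\<^sup>2\<bar> \<le> 1"
  using assms power_le_one[of "\<bar>a - b\<bar>" 2] by auto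

lemma space_prob_algebraD:
  assumes "D \<in> space (prob_algebra M)"
  shows "prob_space D" "sets D = sets M" "space D = space M"
  using assms sets_eq_imp_space_eq[of D M] by (auto simp: space_prob_algebra)

lemma measurable_PiM_power:
  "(\<lambda>D. PiM I (\<lambda>_. D)) \<in> prob_algebra M \<rightarrow>\<^sub>M prob_algebra (PiM I (\<lambda>_. M))"
proof (rule measurable_prob_algebra_generated[OF sets_PiM Int_stable_prod_algebra prod_algebra_sets_into_space])
  fix D assume D: "D \<in> space (prob_algebra M)"
  show "prob_space (PiM I (\<lambda>_. D))"
    using space_prob_algebraD[OF D] by (intro prob_space_PiM) auto
  show "sets (PiM I (\<lambda>_. D)) = sets (PiM I (\<lambda>_. M))"
    using space_prob_algebraD[OF D] by (intro sets_PiM_cong) auto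
next
  fix A assume "A \<in> prod_algebra I (\<lambda>_. M)"
  then obtain J E where A: "A = prod_emb I (\<lambda>_. M) J (\<Pi>\<^sub>E j\<in>J. E j)"
    and J: "finite J" "J \<subseteq> I" and E: "\<And>j. j \<in> J \<Longrightarrow> E j \<in> sets M"
    by (rule prod_algebraE) auto
  have "(\<lambda>D. \<Prod>j\<in>J. emeasure D (E j)) \<in> borel_measurable (prob_algebra M)"
    using E unfolding prob_algebra_def
    by (intro borel_measurable_prod_ennreal measurable_restrict_space1 measurable_emeasure_subprob_algebra)
  then show "(\<lambda>D. emeasure (PiM I (\<lambda>_. D)) A) \<in> borel_measurable (prob_algebra M)"
  proof (rule measurable_cong[THEN iffD1, rotated])
    fix D assume D: "D \<in> space (prob_algebra M)"
    note D' = space_prob_algebraD[OF D]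
    have "A = prod_emb I (\<lambda>_. D) J (\<Pi>\<^sub>E j\<in>J. E j)"
      unfolding A prod_emb_def using D' by simp
    then show "(\<Prod>j\<in>J. emeasure D (E j)) = emeasure (PiM I (\<lambda>_. D)) A"
      using D' J E by (simp add: emeasure_PiM_emb)
  qed
qed

lemma measurable_PiM_reindex [measurable]:
  "(\<lambda>\<omega>. \<omega> \<circ> \<sigma>) \<in> PiM UNIV (\<lambda>_. M) \<rightarrow>\<^sub>M PiM UNIV (\<lambda>_. M)"
  unfolding comp_def by (rule measurable_PiM_single') (auto simp: space_PiM)

lemma borel_measurable_pred_le [measurable (raw)]:
  fixes f :: "'a \<Rightarrow> 'b::{second_countable_topology, linorder_topology}"
  shows "f \<in> borel_measurable M \<Longrightarrow> g \<in> borel_measurable M \<Longrightarrow> Measurable.pred M (\<lambda>w. f w \<le> g w)"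
  unfolding Measurable.pred_def by (rule borel_measurable_le)

lemma ecdf_map:
  fixes \<omega> :: "'a \<Rightarrow> real"
  shows "ecdf (map \<omega> zs) t = (\<Sum>s<length zs. indicator {x. x \<le> t} (\<omega> (zs ! s))) / real (length zs)"
proof -
  have count: "real (length (filter P xs)) = (\<Sum>x\<leftarrow>xs. of_bool (P x))" for P and xs :: "real list"
    by (induction xs) simp_all
  have "ecdf (map \<omega> zs) t = (\<Sum>x\<leftarrow>map \<omega> zs. of_bool (x \<le> t)) / real (length (map \<omega> zs))"
    by (simp only: ecdf_def count)
  then show ?thesis
    by (simp add: sum_list_sum_nth atLeast0LessThan indicator_def)
qed

lemma ecdf_range: "ecdf S t \<in> {0..1}"
proof -
  have "length (filter (\<lambda>s. s \<le> t) S) \<le> length S"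
    by (rule length_filter_le)
  then show ?thesis
    unfolding ecdf_def by (cases "length S = 0") (auto simp: divide_le_eq_1)
qed

lemma measurable_ecdf [measurable]:
  "(\<lambda>\<omega>::nat \<Rightarrow> real. ecdf (map \<omega> zs) (\<omega> t)) \<in> borel_measurable (PiM UNIV (\<lambda>_. borel))"
  unfolding ecdf_map by measurable

lemma sets_list_borel:
  "sets list_borel = sigma_sets UNIV (\<Union>l. (\<lambda>A. {xs. length xs = l \<and> restrict (\<lambda>j. xs ! j) {..<l} \<in> A})
     ` sets (PiM {..<l} (\<lambda>_. (borel :: real measure))))"
  unfolding list_borel_def by (rule sets_measure_of) simp

lemma space_list_borel [simp]: "space list_borel = UNIV"
  unfolding list_borel_def by (simp add: space_measure_of_conv)

lemma length_cylinder_in_sets: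
  "A \<in> sets (PiM {..<l} (\<lambda>_. borel)) \<Longrightarrow> {xs. length xs = l \<and> restrict (\<lambda>j. xs ! j) {..<l} \<in> A} \<in> sets list_borel"
  unfolding sets_list_borel by (rule sigma_sets.Basic) blast

lemma length_in_sets_list_borel: "{xs. length xs = l} \<in> sets list_borel"
  using length_cylinder_in_sets[OF sets.top, of l] by (simp add: space_PiM)

lemma measurable_map_list_borel:
  assumes "set cs \<subseteq> J"
  shows "(\<lambda>y. map y cs) \<in> PiM J (\<lambda>_. borel :: real measure) \<rightarrow>\<^sub>M list_borel"
  unfolding list_borel_def
proof (rule measurable_measure_of)
  fix Y assume "Y \<in> (\<Union>l. (\<lambda>A. {xs. length xs = l \<and> restrict (\<lambda>j. xs ! j) {..<l} \<in> A})
     ` sets (PiM {..<l} (\<lambda>_. (borel :: real measure))))"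
  then obtain l A where A: "A \<in> sets (PiM {..<l} (\<lambda>_. (borel :: real measure)))"
    and Y: "Y = {xs. length xs = l \<and> restrict (\<lambda>j. xs ! j) {..<l} \<in> A}" by blast
  show "(\<lambda>y. map y cs) -` Y \<inter> space (PiM J (\<lambda>_. borel)) \<in> sets (PiM J (\<lambda>_. borel))"
  proof (cases "l = length cs")
    case True
    have "(\<lambda>y. \<lambda>j\<in>{..<l}. y (cs ! j)) \<in> PiM J (\<lambda>_. borel) \<rightarrow>\<^sub>M PiM {..<l} (\<lambda>_. borel :: real measure)"
      using assms True by (intro measurable_restrict measurable_component_singleton) auto
    moreover have "restrict (\<lambda>j. map y cs ! j) {..<l} = (\<lambda>j\<in>{..<l}. y (cs ! j))" for y :: "_ \<Rightarrow> real"
      using True by (intro ext) auto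
    ultimately show ?thesis
      using measurable_sets[OF _ A] unfolding Y True by (simp add: vimage_def)
  next
    case False
    then show ?thesis
      unfolding Y by auto
  qed
qed auto

lemma measurable_nth_list_borel: "(\<lambda>xs. xs ! j) \<in> list_borel \<rightarrow>\<^sub>M (borel :: real measure)"
proof (rule measurableI)
  fix A :: "real set" assume A: "A \<in> sets borel"
  \<comment> \<open>beyond the length of xs, xs ! j is the unspecified constant [] ! (j - length xs)\<close>
  have nth_beyond: "xs ! j = [] ! (j - length xs)" if "length xs \<le> j" for xs :: "real list"
    using that
  proof (induction xs arbitrary: j)
    case (Cons a xs)
    then obtain j' where "j = Suc j'"
      by (cases j) auto
    with Cons show ?case
      by simp
  qed simp
  define C where "C l = (if j < l then (\<lambda>x. x j) -` A \<inter> space (PiM {..<l} (\<lambda>_. borel :: real measure))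
      else if [] ! (j - l) \<in> A then space (PiM {..<l} (\<lambda>_. borel :: real measure)) else {})" for l
  have C: "C l \<in> sets (PiM {..<l} (\<lambda>_. borel))" for l
    unfolding C_def using A by (auto intro!: measurable_sets[OF measurable_component_singleton])
  have "xs \<in> (\<lambda>xs. xs ! j) -` A \<longleftrightarrow> restrict (\<lambda>j. xs ! j) {..<length xs} \<in> C (length xs)" for xs
    using nth_beyond[of xs] by (cases "j < length xs") (auto simp: C_def space_PiM)
  then have "(\<lambda>xs. xs ! j) -` A \<inter> space list_borel = (\<Union>l. {xs. length xs = l \<and> restrict (\<lambda>j. xs ! j) {..<l} \<in> C l})"
    by auto
  also have "\<dots> \<in> sets list_borel"
    using length_cylinder_in_sets[OF C] by blast
  finally show "(\<lambda>xs. xs ! j) -` A \<inter> space list_borel \<in> sets list_borel" .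
qed simp

lemma measurable_apply_snoc:
  assumes H: "\<And>l. (\<lambda>x. H l (map x [0..<Suc l])) \<in> borel_measurable (PiM {..l} (\<lambda>_. borel))"
    and \<psi>: "\<psi> \<in> M \<rightarrow>\<^sub>M list_borel" and z: "z \<in> borel_measurable M"
  shows "(\<lambda>y. H (length (\<psi> y)) (\<psi> y @ [z y])) \<in> borel_measurable M"
proof (rule measurable_piecewise_restrict2[where A="\<lambda>l. \<psi> -` {xs. length xs = l} \<inter> space M"])
  show "\<psi> -` {xs. length xs = l} \<inter> space M \<in> sets M" for l
    by (rule measurable_sets[OF \<psi> length_in_sets_list_borel])
  show "space M = (\<Union>l. \<psi> -` {xs. length xs = l} \<inter> space M)"
    by auto
  fix l
  define coords where "coords y = (\<lambda>j\<in>{..l}. if j < l then \<psi> y ! j else z y)" for y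
  have "coords \<in> M \<rightarrow>\<^sub>M PiM {..l} (\<lambda>_. borel)"
    unfolding coords_def
  proof (rule measurable_restrict)
    show "(\<lambda>y. if j < l then \<psi> y ! j else z y) \<in> borel_measurable M" for j
      using measurable_compose[OF \<psi> measurable_nth_list_borel] z by (cases "j < l") (simp_all add: o_def)
  qed
  then have "(\<lambda>y. H l (map (coords y) [0..<Suc l])) \<in> borel_measurable M"
    using measurable_compose[OF _ H] by (simp add: o_def)
  moreover have "H (length (\<psi> y)) (\<psi> y @ [z y]) = H l (map (coords y) [0..<Suc l])"
    if "y \<in> \<psi> -` {xs. length xs = l} \<inter> space M" for y
  proof -
    have "map (coords y) [0..<Suc l] = \<psi> y @ [z y]"
      using that by (intro nth_equalityI) (auto simp: coords_def nth_append)
    then show ?thesis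
      using that by simp
  qed
  ultimately show "\<exists>h'\<in>borel_measurable M. \<forall>y\<in>\<psi> -` {xs. length xs = l} \<inter> space M.
      H (length (\<psi> y)) (\<psi> y @ [z y]) = h' y"
    by (intro bexI[where x="\<lambda>y. H l (map (coords y) [0..<Suc l])"] ballI)
qed

section \<open>Bounded versions of conditional expectations\<close>

locale bounded_cond_exp = prob_space P for P :: "'a measure" +
  fixes X :: "'a \<Rightarrow> 'b" and N :: "'b measure" and g :: "'b \<Rightarrow> real" and W :: "'a \<Rightarrow> real"
  assumes measurable_X [measurable]: "X \<in> P \<rightarrow>\<^sub>M N"
    and measurable_g [measurable]: "g \<in> borel_measurable N"
    and measurable_W [measurable]: "W \<in> borel_measurable P"
    and g_range: "\<And>y. g y \<in> {0..1}" and W_range: "\<And>\<omega>. W \<omega> \<in> {0..1}"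
    and integral_indicator_eq: "\<And>B. B \<in> sets N \<Longrightarrow>
      (\<integral>\<omega>. indicator B (X \<omega>) * g (X \<omega>) \<partial>P) = (\<integral>\<omega>. indicator B (X \<omega>) * W \<omega> \<partial>P)"
begin

lemma integrable_bounded:
  fixes f :: "'a \<Rightarrow> real"
  assumes "f \<in> borel_measurable P" "\<And>\<omega>. \<bar>f \<omega>\<bar> \<le> c"
  shows "integrable P f"
  using assms by (intro integrable_const_bound[where B=c]) auto

lemma integral_mult_cond_exp:
  assumes [measurable]: "\<phi> \<in> borel_measurable N" and \<phi>_bounded: "\<And>y. \<bar>\<phi> y\<bar> \<le> c"
  shows "(\<integral>\<omega>. \<phi> (X \<omega>) * g (X \<omega>) \<partial>P) = (\<integral>\<omega>. \<phi> (X \<omega>) * W \<omega> \<partial>P)"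
proof -
  define law where "law G = distr (density P (\<lambda>\<omega>. ennreal (G \<omega>))) N X" for G
  have emeasure_law: "emeasure (law G) B = ennreal (\<integral>\<omega>. indicator B (X \<omega>) * G \<omega> \<partial>P)"
    if B: "B \<in> sets N" and [measurable]: "G \<in> borel_measurable P" and G: "\<And>\<omega>. G \<omega> \<in> {0..1}" for G B
  proof -
    have "X -` B \<inter> space P \<in> sets P"
      using B by measurable
    then have "emeasure (law G) B = (\<integral>\<^sup>+\<omega>. ennreal (G \<omega>) * indicator (X -` B \<inter> space P) \<omega> \<partial>P)"
      unfolding law_def using B by (simp add: emeasure_distr emeasure_density)
    also have "\<dots> = (\<integral>\<^sup>+\<omega>. ennreal (indicator B (X \<omega>) * G \<omega>) \<partial>P)"
      by (intro nn_integral_cong) (auto simp: indicator_def)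
    also have "\<dots> = ennreal (\<integral>\<omega>. indicator B (X \<omega>) * G \<omega> \<partial>P)"
      using B G by (intro nn_integral_eq_integral integrable_bounded[where c=1]) (auto simp: indicator_def)
    finally show ?thesis .
  qed
  \<comment> \<open>the densities g \<circ> X and W induce the same law of X, and both integrals are taken against it\<close>
  have "law (\<lambda>\<omega>. g (X \<omega>)) = law W"
  proof (rule measure_eqI)
    show "sets (law (\<lambda>\<omega>. g (X \<omega>))) = sets (law W)" by (simp add: law_def)
    fix B assume "B \<in> sets (law (\<lambda>\<omega>. g (X \<omega>)))"
    then have B: "B \<in> sets N" by (simp add: law_def)
    show "emeasure (law (\<lambda>\<omega>. g (X \<omega>))) B = emeasure (law W) B"
      using emeasure_law[OF B] integral_indicator_eq[OF B] g_range W_range by simp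
  qed
  moreover have "(\<integral>\<omega>. \<phi> (X \<omega>) * G \<omega> \<partial>P) = (\<integral>y. \<phi> y \<partial>law G)"
    if [measurable]: "G \<in> borel_measurable P" and "\<And>\<omega>. G \<omega> \<in> {0..1}" for G
    unfolding law_def using that by (simp add: integral_distr integral_density mult.commute)
  ultimately show ?thesis
    using g_range W_range by simp
qed

lemma pythagoras:
  assumes [measurable]: "\<gamma> \<in> borel_measurable N" and \<gamma>_range: "\<And>y. \<gamma> y \<in> {0..1}"
  shows "(\<integral>\<omega>. (\<gamma> (X \<omega>) - W \<omega>)\<^sup>2 \<partial>P)
       = (\<integral>\<omega>. (g (X \<omega>) - W \<omega>)\<^sup>2 \<partial>P) + (\<integral>\<omega>. (\<gamma> (X \<omega>) - g (X \<omega>))\<^sup>2 \<partial>P)"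
proof -
  have diff_bounded: "\<bar>a - b\<bar> \<le> 1" if "a \<in> {0..1}" "b \<in> {0..1}" for a b :: real
    using that by auto
  have cross: "(\<integral>\<omega>. (\<gamma> (X \<omega>) - g (X \<omega>)) * (g (X \<omega>) - W \<omega>) \<partial>P) = 0"
  proof -
    have "integrable P (\<lambda>\<omega>. (\<gamma> (X \<omega>) - g (X \<omega>)) * g (X \<omega>))"
      "integrable P (\<lambda>\<omega>. (\<gamma> (X \<omega>) - g (X \<omega>)) * W \<omega>)"
      using diff_bounded[OF \<gamma>_range g_range] g_range W_range
      by (auto intro!: integrable_bounded[where c=1] mult_le_one simp: abs_mult)
    then show ?thesis
      using integral_mult_cond_exp[of "\<lambda>y. \<gamma> y - g y" 1] diff_bounded[OF \<gamma>_range g_range]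
      by (simp add: right_diff_distrib)
  qed
  have "(\<integral>\<omega>. (\<gamma> (X \<omega>) - W \<omega>)\<^sup>2 \<partial>P) = (\<integral>\<omega>. (g (X \<omega>) - W \<omega>)\<^sup>2 + (\<gamma> (X \<omega>) - g (X \<omega>))\<^sup>2
      + 2 * ((\<gamma> (X \<omega>) - g (X \<omega>)) * (g (X \<omega>) - W \<omega>)) \<partial>P)"
    by (intro Bochner_Integration.integral_cong) (auto simp: power2_eq_square algebra_simps)
  also have "\<dots> = (\<integral>\<omega>. (g (X \<omega>) - W \<omega>)\<^sup>2 \<partial>P) + (\<integral>\<omega>. (\<gamma> (X \<omega>) - g (X \<omega>))\<^sup>2 \<partial>P)"
  proof -
    have "integrable P (\<lambda>\<omega>. (g (X \<omega>) - W \<omega>)\<^sup>2)" "integrable P (\<lambda>\<omega>. (\<gamma> (X \<omega>) - g (X \<omega>))\<^sup>2)"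
      "integrable P (\<lambda>\<omega>. (\<gamma> (X \<omega>) - g (X \<omega>)) * (g (X \<omega>) - W \<omega>))"
      using abs_square_diff_le_one[OF g_range W_range] abs_square_diff_le_one[OF \<gamma>_range g_range]
        diff_bounded[OF g_range W_range] diff_bounded[OF \<gamma>_range g_range]
      by (auto intro!: integrable_bounded[where c=1] mult_le_one simp: abs_mult)
    then show ?thesis
      using cross by simp
  qed
  finally show ?thesis .
qed

lemma same_integrals:
  assumes "W' \<in> borel_measurable P" "\<And>\<omega>. W' \<omega> \<in> {0..1}"
    and "\<And>B. B \<in> sets N \<Longrightarrow> (\<integral>\<omega>. indicator B (X \<omega>) * W \<omega> \<partial>P) = (\<integral>\<omega>. indicator B (X \<omega>) * W' \<omega> \<partial>P)"
  shows "bounded_cond_exp P X N g W'"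
  using assms g_range integral_indicator_eq by unfold_locales auto

lemma measure_preserving:
  assumes "prob_space P'" and T [measurable]: "T \<in> P' \<rightarrow>\<^sub>M P" and preserving: "distr P' P T = P"
  shows "bounded_cond_exp P' (\<lambda>\<omega>. X (T \<omega>)) N g (\<lambda>\<omega>. W (T \<omega>))"
proof -
  have transfer: "(\<integral>\<omega>. F (T \<omega>) \<partial>P') = (\<integral>\<omega>. F \<omega> \<partial>P)" if "F \<in> borel_measurable P" for F :: "'a \<Rightarrow> real"
    using integral_distr[OF T that] unfolding preserving ..
  show ?thesis
  proof (rule bounded_cond_exp.intro[OF assms(1)], unfold_locales)
    show "(\<lambda>\<omega>. X (T \<omega>)) \<in> P' \<rightarrow>\<^sub>M N"
      by measurable
    show "(\<lambda>\<omega>. W (T \<omega>)) \<in> borel_measurable P'"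
      by measurable
    fix B assume [measurable]: "B \<in> sets N"
    have "(\<integral>\<omega>. indicator B (X (T \<omega>)) * g (X (T \<omega>)) \<partial>P') = (\<integral>\<omega>. indicator B (X \<omega>) * g (X \<omega>) \<partial>P)"
      by (rule transfer) measurable
    also have "\<dots> = (\<integral>\<omega>. indicator B (X \<omega>) * W \<omega> \<partial>P)"
      by (rule integral_indicator_eq) measurable
    also have "\<dots> = (\<integral>\<omega>. indicator B (X (T \<omega>)) * W (T \<omega>) \<partial>P')"
      by (rule transfer[symmetric]) measurable
    finally show "(\<integral>\<omega>. indicator B (X (T \<omega>)) * g (X (T \<omega>)) \<partial>P') = (\<integral>\<omega>. indicator B (X (T \<omega>)) * W (T \<omega>) \<partial>P')" .
  qed (use measurable_g g_range W_range in auto)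
qed

lemma relabel:
  assumes [measurable]: "\<phi> \<in> N' \<rightarrow>\<^sub>M N" "\<psi> \<in> N \<rightarrow>\<^sub>M N'"
    and X': "\<And>\<omega>. X' \<omega> = \<psi> (X \<omega>)" and X: "\<And>\<omega>. X \<omega> = \<phi> (X' \<omega>)"
  shows "bounded_cond_exp P X' N' (\<lambda>y. g (\<phi> y)) W"
proof (rule bounded_cond_exp.intro[OF prob_space_axioms], unfold_locales)
  have X'_eq: "X' = (\<lambda>\<omega>. \<psi> (X \<omega>))"
    by (rule ext) (rule X')
  show "X' \<in> P \<rightarrow>\<^sub>M N'"
    unfolding X'_eq by measurable
  show "(\<lambda>y. g (\<phi> y)) \<in> borel_measurable N'"
    by measurable
  show "W \<in> borel_measurable P"
    by measurable
  show "g (\<phi> y) \<in> {0..1}" "W \<omega> \<in> {0..1}" for y \<omega>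
    using g_range W_range by blast+
  fix B assume "B \<in> sets N'"
  then have B: "\<psi> -` B \<inter> space N \<in> sets N"
    by measurable
  have ind: "indicator (\<psi> -` B \<inter> space N) (X \<omega>) = (indicator B (X' \<omega>) :: real)" if "\<omega> \<in> space P" for \<omega>
    using measurable_space[OF measurable_X that] by (simp add: X' indicator_def)
  have "(\<integral>\<omega>. indicator B (X' \<omega>) * g (\<phi> (X' \<omega>)) \<partial>P)
      = (\<integral>\<omega>. indicator (\<psi> -` B \<inter> space N) (X \<omega>) * g (X \<omega>) \<partial>P)"
    by (intro Bochner_Integration.integral_cong) (simp_all add: ind flip: X)
  also have "\<dots> = (\<integral>\<omega>. indicator (\<psi> -` B \<inter> space N) (X \<omega>) * W \<omega> \<partial>P)"
    by (rule integral_indicator_eq[OF B])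
  also have "\<dots> = (\<integral>\<omega>. indicator B (X' \<omega>) * W \<omega> \<partial>P)"
    by (intro Bochner_Integration.integral_cong) (simp_all add: ind)
  finally show "(\<integral>\<omega>. indicator B (X' \<omega>) * g (\<phi> (X' \<omega>)) \<partial>P) = (\<integral>\<omega>. indicator B (X' \<omega>) * W \<omega> \<partial>P)" .
qed

end

section \<open>Relabelling coordinates\<close>

lemma inj_extend_distinct_list:
  assumes "distinct cs" "inj e" "\<And>t. e t \<notin> set cs"
  shows "inj (\<lambda>t. if t < length cs then cs ! t else e t)"
proof (rule injI)
  fix x y assume eq: "(if x < length cs then cs ! x else e x) = (if y < length cs then cs ! y else e y)"
  show "x = y"
  proof (cases "x < length cs"; cases "y < length cs")
    assume "x < length cs" "y < length cs"
    then show ?thesis using eq assms(1) by (simp add: nth_eq_iff_index_eq)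
  next
    assume "x < length cs" "\<not> y < length cs"
    then show ?thesis using eq assms(3)[of y] by (metis nth_mem)
  next
    assume "\<not> x < length cs" "y < length cs"
    then show ?thesis using eq assms(3)[of x] by (metis nth_mem)
  next
    assume "\<not> x < length cs" "\<not> y < length cs"
    then show ?thesis using eq assms(2) by (simp add: inj_eq)
  qed
qed

definition pooled_indices :: "nat \<Rightarrow> (nat \<Rightarrow> nat) \<Rightarrow> nat \<Rightarrow> (nat \<times> nat) list" where
  "pooled_indices m n i = concat (map (\<lambda>j. map (Pair j) [0..<n j]) (filter (\<lambda>j. j \<noteq> i) [0..<m]))"

lemma others_truthful: "others m n ((\<lambda>_. id)(i := f)) i \<omega> = map \<omega> (pooled_indices m n i)"
  unfolding others_def pooled_indices_def sample_def map_concat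
  by (rule arg_cong[where f=concat]) (auto intro!: map_cong)

lemma distinct_pooled_indices: "distinct (pooled_indices m n i)"
proof -
  have "distinct (concat (map (\<lambda>j. map (Pair j) [0..<n j]) js))" if "distinct js" for js
    using that by (induction js) (auto simp: distinct_map inj_on_def)
  then show ?thesis
    unfolding pooled_indices_def by simp
qed

lemma set_pooled_indices: "c \<in> set (pooled_indices m n i) \<Longrightarrow> fst c < m \<and> fst c \<noteq> i"
  unfolding pooled_indices_def by auto

lemma length_pooled_indices: "length (pooled_indices m n i) = (\<Sum>j\<in>{..<m} - {i}. n j)"
proof -
  have "length (pooled_indices m n i) = sum_list (map n (filter (\<lambda>j. j \<noteq> i) [0..<m]))"
    unfolding pooled_indices_def by (simp add: length_concat o_def)
  also have "\<dots> = sum n (set (filter (\<lambda>j. j \<noteq> i) [0..<m]))"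
    by (rule sum_list_distinct_conv_sum_set) simp
  also have "set (filter (\<lambda>j. j \<noteq> i) [0..<m]) = {..<m} - {i}"
    by auto
  finally show ?thesis .
qed

lemma valid_h_range:
  assumes "valid_h Q h" "r \<ge> 1" "length xs = Suc k"
  shows "h k r xs \<in> {0..1}"
proof -
  have "h k r (map (\<lambda>j. xs ! j) [0..<Suc k]) \<in> {0..1}"
    using assms(1,2) unfolding valid_h_def is_cond_exp_def by blast
  then show ?thesis
    using map_nth[of xs] assms(3) by simp
qed

lemma measurable_h_snoc:
  assumes h: "valid_h Q h" and r: "r \<ge> 1" and f [measurable]: "f \<in> list_borel \<rightarrow>\<^sub>M list_borel"
    and J: "{..k} \<subseteq> J"
  shows "(\<lambda>x. h (length (f (map x [0..<k]))) r (f (map x [0..<k]) @ [x k])) \<in> borel_measurable (PiM J (\<lambda>_. borel))"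
proof (rule measurable_apply_snoc)
  show "(\<lambda>x. h l r (map x [0..<Suc l])) \<in> borel_measurable (PiM {..l} (\<lambda>_. borel))" for l
    using h r unfolding valid_h_def is_cond_exp_def by blast
  have [measurable]: "(\<lambda>x. map x [0..<k]) \<in> PiM J (\<lambda>_. borel) \<rightarrow>\<^sub>M list_borel"
    using J by (intro measurable_map_list_borel) auto
  show "(\<lambda>x. f (map x [0..<k])) \<in> PiM J (\<lambda>_. borel) \<rightarrow>\<^sub>M list_borel"
    by measurable
  show "(\<lambda>x. x k) \<in> borel_measurable (PiM J (\<lambda>_. borel))"
    using J by (intro measurable_component_singleton) auto
qed

text \<open>Coordinates 0..<k hold the agent's data, k the test point T and k+1..k+r the points Z.\<close>
definition canonical_loss ::
  "(nat \<Rightarrow> nat \<Rightarrow> real list \<Rightarrow> real) \<Rightarrow> (real list \<Rightarrow> real list) \<Rightarrow> nat \<Rightarrow> nat \<Rightarrow> (nat \<Rightarrow> real) \<Rightarrow> real" where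
  "canonical_loss h f k r x =
     (h (length (f (map x [0..<k]))) r (f (map x [0..<k]) @ [x k]) - ecdf (map x [Suc k..<Suc k + r]) (x k))\<^sup>2"

lemma measurable_canonical_loss:
  assumes "valid_h Q h" "r \<ge> 1" "f \<in> list_borel \<rightarrow>\<^sub>M list_borel"
  shows "canonical_loss h f k r \<in> borel_measurable (PiM UNIV (\<lambda>_. borel))"
proof -
  have "(\<lambda>x. h (length (f (map x [0..<k]))) r (f (map x [0..<k]) @ [x k])) \<in> borel_measurable (PiM UNIV (\<lambda>_. borel))"
    by (rule measurable_h_snoc[OF assms]) simp
  then show ?thesis
    unfolding canonical_loss_def by measurable
qed

lemma canonical_loss_bounded:
  assumes "valid_h Q h" "r \<ge> 1"
  shows "\<bar>canonical_loss h f k r x\<bar> \<le> 1"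
proof -
  have "h (length (f (map x [0..<k]))) r (f (map x [0..<k]) @ [x k]) \<in> {0..1}"
    by (rule valid_h_range[OF assms]) simp
  then show ?thesis
    unfolding canonical_loss_def by (intro abs_square_diff_le_one ecdf_range)
qed

text \<open>Coordinates 0..<n i hold agent i's data, n i the p-th pooled point of the others (the
  test point) and the following ones the remaining pooled points; further coordinates are
  sent to indices of no agent.\<close>
definition pooled_layout :: "nat \<Rightarrow> (nat \<Rightarrow> nat) \<Rightarrow> nat \<Rightarrow> nat \<Rightarrow> nat \<Rightarrow> nat \<times> nat" where
  "pooled_layout m n i p t =
    (let cs = pooled_indices m n i; layout = map (Pair i) [0..<n i] @ cs ! p # take p cs @ drop (Suc p) cs
     in if t < length layout then layout ! t else (m + t, 0))"

lemma inj_pooled_layout: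
  assumes i: "i < m" and p: "p < length (pooled_indices m n i)"
  shows "inj (pooled_layout m n i p)"
proof -
  let ?cs = "pooled_indices m n i"
  let ?rest = "take p ?cs @ drop (Suc p) ?cs"
  have split: "?cs = take p ?cs @ ?cs ! p # drop (Suc p) ?cs"
    using p by (simp add: id_take_nth_drop)
  have "distinct (take p ?cs @ ?cs ! p # drop (Suc p) ?cs)"
    using distinct_pooled_indices[of m n i] by (subst (asm) split)
  then have distinct: "distinct (?cs ! p # ?rest)"
    by auto
  have set_rest: "insert (?cs ! p) (set ?rest) = set ?cs"
    by (subst (2) split) auto
  have "(i, t) \<notin> set ?cs" for t
    using set_pooled_indices[of "(i, t)" m n i] by auto
  with distinct set_rest have "distinct (map (Pair i) [0..<n i] @ ?cs ! p # ?rest)"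
    by (auto simp: distinct_map inj_on_def)
  moreover have "(m + t, 0) \<notin> set (map (Pair i) [0..<n i] @ ?cs ! p # ?rest)" for t
    using i set_pooled_indices[of "(m + t, 0)" m n i] by (auto simp flip: set_rest)
  ultimately show ?thesis
    unfolding pooled_layout_def Let_def by (intro inj_extend_distinct_list) (auto simp: inj_def)
qed

lemma loss_given_pooled_layout:
  assumes "length (pooled_indices m n i) = Suc r"
  shows "loss_given h (f (sample \<omega> i (n i))) (others m n ((\<lambda>_. id)(i := f)) i \<omega>)
    = (\<Sum>p<Suc r. canonical_loss h f (n i) r (\<omega> \<circ> pooled_layout m n i p)) / Suc r"
proof -
  let ?cs = "pooled_indices m n i"
  have "map (\<omega> \<circ> pooled_layout m n i p) [0..<n i] = sample \<omega> i (n i)"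
    "(\<omega> \<circ> pooled_layout m n i p) (n i) = \<omega> (?cs ! p)"
    "map (\<omega> \<circ> pooled_layout m n i p) [Suc (n i)..<Suc (n i) + r] = map \<omega> (take p ?cs @ drop (Suc p) ?cs)"
    if "p < Suc r" for p
    using that assms unfolding pooled_layout_def Let_def sample_def
    by (auto simp: nth_append intro!: nth_equalityI simp del: upt_Suc)
  then show ?thesis
    unfolding loss_given_def others_truthful
    using assms by (intro arg_cong2[where f="(/)"] sum.cong)
      (auto simp: canonical_loss_def take_map drop_map simp del: upt_Suc)
qed

lemma map_restrict_upt: "l \<le> Suc k \<Longrightarrow> map (restrict x {..k}) [0..<l] = map x [0..<l]"
  by auto

text \<open>Coordinates for sample size k <= b: the test point T goes to 0 and the first point of Z
  to 1, as in the definition of a degenerate prior; the data go to 2..<k+2 and the remaining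
  points of Z beyond b + 1, so that the layouts for all k <= b share T, Z and common data.\<close>
definition common_layout :: "nat \<Rightarrow> nat \<Rightarrow> nat \<Rightarrow> nat" where
  "common_layout b k t = (if t < k then t + 2 else if t = k then 0 else if t = Suc k then 1 else b + t - k)"

lemma inj_common_layout: "k \<le> b \<Longrightarrow> inj (common_layout b k)"
  unfolding common_layout_def inj_def by (auto split: if_splits)

lemma common_layout_image: "common_layout b k ` {..k} = insert 0 {2..<k + 2}"
proof -
  have "common_layout b k ` {..<k} = {2..<k + 2}"
  proof
    show "{2..<k + 2} \<subseteq> common_layout b k ` {..<k}"
    proof
      fix c assume "c \<in> {2..<k + 2}"
      then have "c = common_layout b k (c - 2)" "c - 2 \<in> {..<k}"
        by (auto simp: common_layout_def)
      then show "c \<in> common_layout b k ` {..<k}"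
        by blast
    qed
  qed (auto simp: common_layout_def)
  moreover have "{..k} = insert k {..<k}" and "common_layout b k k = 0"
    by (auto simp: common_layout_def)
  ultimately show ?thesis
    by (simp only: image_insert)
qed

lemma map_common_layout_upt:
  assumes "r \<ge> 1"
  shows "map (common_layout b k) [Suc k..<Suc k + r] = 1 # [b + 2..<b + r + 1]"
proof (rule nth_equalityI)
  show "length (map (common_layout b k) [Suc k..<Suc k + r]) = length (1 # [b + 2..<b + r + 1])"
    using assms by (simp del: upt_Suc)
  fix s assume "s < length (map (common_layout b k) [Suc k..<Suc k + r])"
  then show "map (common_layout b k) [Suc k..<Suc k + r] ! s = (1 # [b + 2..<b + r + 1]) ! s"
    by (cases s) (auto simp: common_layout_def simp del: upt_Suc)
qed

lemma ecdf_common_layout: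
  assumes "r \<ge> 1"
  shows "ecdf (map (\<omega> \<circ> common_layout b k) [Suc k..<Suc k + r]) ((\<omega> \<circ> common_layout b k) k)
    = ecdf (map \<omega> (1 # [b + 2..<b + r + 1])) (\<omega> 0)"
proof -
  have "map (\<omega> \<circ> common_layout b k) [Suc k..<Suc k + r] = map \<omega> (1 # [b + 2..<b + r + 1])"
    by (simp only: map_common_layout_upt[OF assms, of b k, symmetric] map_map)
  moreover have "common_layout b k k = 0"
    by (simp add: common_layout_def)
  ultimately show ?thesis
    by simp
qed

section \<open>Mixtures of i.i.d. sequences\<close>

locale prior =
  fixes Q :: "real measure measure"
  assumes is_prior: "is_prior Q"
begin

definition iid_mixture :: "('i \<Rightarrow> real) measure" where
  "iid_mixture = Q \<bind> (\<lambda>D. PiM UNIV (\<lambda>_. D))"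

lemma prior_in_space: "Q \<in> space (prob_algebra (prob_algebra borel))"
  using is_prior unfolding is_prior_def by (simp add: space_prob_algebra)

lemma space_prior: "space Q = space (prob_algebra borel)"
  using is_prior sets_eq_imp_space_eq unfolding is_prior_def by blast

lemma measurable_PiM_power_prior:
  "(\<lambda>D. PiM UNIV (\<lambda>_. D)) \<in> Q \<rightarrow>\<^sub>M subprob_algebra (PiM UNIV (\<lambda>_. borel))"
  using measurable_prob_algebraD[OF measurable_PiM_power] is_prior unfolding is_prior_def
  by (simp cong: measurable_cong_sets)

lemma prob_space_iid_mixture: "prob_space iid_mixture"
  unfolding iid_mixture_def by (rule prob_space_bind'[OF prior_in_space measurable_PiM_power])

lemma sets_iid_mixture [measurable_cong]: "sets iid_mixture = sets (PiM UNIV (\<lambda>_. borel))"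
  unfolding iid_mixture_def by (rule sets_bind'[OF prior_in_space measurable_PiM_power])

lemma integral_iid_mixture:
  fixes F :: "('i \<Rightarrow> real) \<Rightarrow> real"
  assumes F: "F \<in> borel_measurable (PiM UNIV (\<lambda>_. borel))" and bounded: "\<And>\<omega>. \<bar>F \<omega>\<bar> \<le> c"
  shows "(\<integral>D. (\<integral>\<omega>. F \<omega> \<partial>PiM UNIV (\<lambda>_. D)) \<partial>Q) = (\<integral>\<omega>. F \<omega> \<partial>iid_mixture)"
proof -
  have finite: "finite_measure Q"
    using is_prior unfolding is_prior_def by (auto intro: prob_space.finite_measure)
  have "prob_space (PiM (UNIV :: 'i set) (\<lambda>_. D))" if "D \<in> space Q" for D
    using that space_prob_algebraD(1) space_prior by (intro prob_space_PiM) auto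
  then have subprob: "AE D in Q. emeasure (PiM UNIV (\<lambda>_. D)) (space (PiM (UNIV :: 'i set) (\<lambda>_. D))) \<le> ennreal 1"
    by (intro AE_I2) (simp add: prob_space.emeasure_space_1 del: space_PiM)
  show ?thesis
    unfolding iid_mixture_def using bounded
    by (intro integral_bind[OF F _ measurable_PiM_power_prior finite subprob, symmetric]) auto
qed

lemma integrable_iid_mixture:
  fixes F :: "_ \<Rightarrow> real"
  assumes "F \<in> borel_measurable (PiM UNIV (\<lambda>_. borel))" and "\<And>\<omega>. \<bar>F \<omega>\<bar> \<le> c"
  shows "integrable iid_mixture F"
  using assms prob_space.finite_measure[OF prob_space_iid_mixture]
  by (intro finite_measure.integrable_const_bound[where B=c]) (auto cong: measurable_cong_sets)

lemma AE_iid_mixture: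
  assumes "Measurable.pred (PiM UNIV (\<lambda>_. borel)) P"
  shows "(AE \<omega> in iid_mixture. P \<omega>) \<longleftrightarrow> (AE D in Q. AE \<omega> in PiM UNIV (\<lambda>_. D). P \<omega>)"
  unfolding iid_mixture_def using assms by (rule AE_bind[OF measurable_PiM_power_prior])

lemma distr_iid_mixture_reindex:
  assumes "inj \<sigma>"
  shows "distr iid_mixture iid_mixture (\<lambda>\<omega>. \<omega> \<circ> \<sigma>) = iid_mixture"
proof -
  have "distr iid_mixture iid_mixture (\<lambda>\<omega>. \<omega> \<circ> \<sigma>)
      = Q \<bind> (\<lambda>D. distr (PiM UNIV (\<lambda>_. D)) (PiM UNIV (\<lambda>_. borel)) (\<lambda>\<omega>. \<omega> \<circ> \<sigma>))"
    unfolding distr_cong[OF refl sets_iid_mixture refl] unfolding iid_mixture_def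
  proof (rule distr_bind[OF measurable_PiM_power_prior])
    show "space Q \<noteq> {}"
      using prob_space.not_empty is_prior unfolding is_prior_def by blast
  qed (rule measurable_PiM_reindex)
  also have "\<dots> = iid_mixture"
    unfolding iid_mixture_def
  proof (rule bind_cong[OF refl])
    fix D assume "D \<in> space Q"
    then have D: "prob_space D" "sets D = sets borel"
      using space_prob_algebraD[of D borel] space_prior by auto
    have "distr (PiM UNIV (\<lambda>_. D)) (PiM UNIV (\<lambda>_. borel)) (\<lambda>\<omega>. \<omega> \<circ> \<sigma>)
        = distr (PiM UNIV (\<lambda>_. D)) (PiM UNIV (\<lambda>_. D)) (\<lambda>\<omega>. \<lambda>n\<in>UNIV. \<omega> (\<sigma> n))"
      using D by (intro distr_cong sets_PiM_cong) auto
    also have "\<dots> = PiM UNIV (\<lambda>_. D)"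
      using distr_PiM_reindex[of UNIV "\<lambda>_. D" \<sigma> UNIV] D assms by simp
    finally show "distr (PiM UNIV (\<lambda>_. D)) (PiM UNIV (\<lambda>_. borel)) (\<lambda>\<omega>. \<omega> \<circ> \<sigma>) = PiM UNIV (\<lambda>_. D)" .
  qed
  finally show ?thesis .
qed

lemma integral_iid_mixture_reindex:
  fixes F :: "_ \<Rightarrow> real"
  assumes "inj \<sigma>" and F: "F \<in> borel_measurable (PiM UNIV (\<lambda>_. borel))"
  shows "(\<integral>\<omega>. F (\<omega> \<circ> \<sigma>) \<partial>iid_mixture) = (\<integral>\<omega>. F \<omega> \<partial>iid_mixture)"
proof -
  have "(\<lambda>\<omega>. \<omega> \<circ> \<sigma>) \<in> iid_mixture \<rightarrow>\<^sub>M iid_mixture" "F \<in> borel_measurable iid_mixture"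
    using F by measurable
  from integral_distr[OF this] show ?thesis
    unfolding distr_iid_mixture_reindex[OF assms(1)] ..
qed

lemma integral_mean_reindex:
  fixes \<Psi> :: "('j \<Rightarrow> real) \<Rightarrow> real" and \<sigma> :: "nat \<Rightarrow> 'j \<Rightarrow> 'i"
  assumes "N > 0" and \<sigma>: "\<And>p. p < N \<Longrightarrow> inj (\<sigma> p)"
    and [measurable]: "\<Psi> \<in> borel_measurable (PiM UNIV (\<lambda>_. borel))" and bounded: "\<And>x. \<bar>\<Psi> x\<bar> \<le> c"
  shows "(\<integral>D. (\<integral>\<omega>. (\<Sum>p<N. \<Psi> (\<omega> \<circ> \<sigma> p)) / N \<partial>PiM UNIV (\<lambda>_. D)) \<partial>Q) = (\<integral>x. \<Psi> x \<partial>iid_mixture)"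
proof -
  have "\<bar>\<Sum>p<N. \<Psi> (\<omega> \<circ> \<sigma> p)\<bar> \<le> N * c" for \<omega>
  proof -
    have "\<bar>\<Sum>p<N. \<Psi> (\<omega> \<circ> \<sigma> p)\<bar> \<le> (\<Sum>p<N. \<bar>\<Psi> (\<omega> \<circ> \<sigma> p)\<bar>)"
      by (rule sum_abs)
    also have "\<dots> \<le> N * c"
      using sum_bounded_above[of "{..<N}" "\<lambda>p. \<bar>\<Psi> (\<omega> \<circ> \<sigma> p)\<bar>" c] bounded by simp
    finally show ?thesis .
  qed
  then have "\<bar>(\<Sum>p<N. \<Psi> (\<omega> \<circ> \<sigma> p)) / N\<bar> \<le> c" for \<omega>
    using \<open>N > 0\<close> by (simp add: abs_divide divide_le_eq mult.commute)
  then have "(\<integral>D. (\<integral>\<omega>. (\<Sum>p<N. \<Psi> (\<omega> \<circ> \<sigma> p)) / N \<partial>PiM UNIV (\<lambda>_. D)) \<partial>Q)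
      = (\<integral>\<omega>. (\<Sum>p<N. \<Psi> (\<omega> \<circ> \<sigma> p)) / N \<partial>iid_mixture)"
    by (intro integral_iid_mixture) measurable
  also have "\<dots> = (\<Sum>p<N. \<integral>\<omega>. \<Psi> (\<omega> \<circ> \<sigma> p) \<partial>iid_mixture) / N"
  proof -
    have "integrable iid_mixture (\<lambda>\<omega>. \<Psi> (\<omega> \<circ> \<sigma> p))" for p
      using bounded by (intro integrable_iid_mixture[where c=c]) measurable
    then show ?thesis
      by simp
  qed
  also have "\<dots> = (\<Sum>p<N. \<integral>x. \<Psi> x \<partial>iid_mixture) / N"
    using integral_iid_mixture_reindex[OF \<sigma>] by simp
  finally show ?thesis
    using \<open>N > 0\<close> by simp
qed

lemma is_cond_exp_iff_bounded_cond_exp: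
  assumes [measurable]: "W \<in> borel_measurable (PiM UNIV (\<lambda>_. borel))" and W_range: "\<And>\<omega>. W \<omega> \<in> {0..1}"
  shows "is_cond_exp Q I g W \<longleftrightarrow> bounded_cond_exp iid_mixture (\<lambda>\<omega>. restrict \<omega> I) (PiM I (\<lambda>_. borel)) g W"
proof -
  have [measurable]: "(\<lambda>\<omega>. restrict \<omega> I) \<in> PiM UNIV (\<lambda>_. borel) \<rightarrow>\<^sub>M PiM I (\<lambda>_. borel :: real measure)"
    by (rule measurable_restrict_subset) simp
  have mixture: "(\<integral>D. (\<integral>\<omega>. indicator B (restrict \<omega> I) * G \<omega> \<partial>PiM UNIV (\<lambda>_. D)) \<partial>Q)
      = (\<integral>\<omega>. indicator B (restrict \<omega> I) * G \<omega> \<partial>iid_mixture)"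
    if [measurable]: "B \<in> sets (PiM I (\<lambda>_. borel))" "G \<in> borel_measurable (PiM UNIV (\<lambda>_. borel))"
      and "\<And>\<omega>. G \<omega> \<in> {0..1}" for B and G :: "(nat \<Rightarrow> real) \<Rightarrow> real"
    using that(3) by (intro integral_iid_mixture[where c=1]) (measurable, auto simp: indicator_def)
  have g: "(\<lambda>\<omega>. g (restrict \<omega> I)) \<in> borel_measurable (PiM UNIV (\<lambda>_. borel))"
    if "g \<in> borel_measurable (PiM I (\<lambda>_. borel))" using that by measurable
  show ?thesis
    unfolding is_cond_exp_def bounded_cond_exp_def bounded_cond_exp_axioms_def
    using prob_space_iid_mixture W_range mixture[OF _ g] mixture[of _ W]
    by (auto simp: measurable_cong_sets[OF sets_iid_mixture refl])
qed

lemma is_cond_exp_reindex: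
  assumes ce: "is_cond_exp Q I g W" and \<tau>: "inj \<tau>"
    and [measurable]: "W \<in> borel_measurable (PiM UNIV (\<lambda>_. borel))" and W_range: "\<And>\<omega>. W \<omega> \<in> {0..1}"
  shows "is_cond_exp Q (\<tau> ` I) (\<lambda>y. g (\<lambda>t\<in>I. y (\<tau> t))) (\<lambda>\<omega>. W (\<omega> \<circ> \<tau>))"
proof -
  interpret bounded_cond_exp iid_mixture "\<lambda>\<omega>. restrict \<omega> I" "PiM I (\<lambda>_. borel)" g W
    using ce is_cond_exp_iff_bounded_cond_exp W_range by simp
  have "bounded_cond_exp iid_mixture (\<lambda>\<omega>. restrict (\<omega> \<circ> \<tau>) I) (PiM I (\<lambda>_. borel)) g (\<lambda>\<omega>. W (\<omega> \<circ> \<tau>))"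
    by (rule measure_preserving[OF prob_space_iid_mixture _ distr_iid_mixture_reindex[OF \<tau>]]) measurable
  then have "bounded_cond_exp iid_mixture (\<lambda>\<omega>. restrict \<omega> (\<tau> ` I)) (PiM (\<tau> ` I) (\<lambda>_. borel))
      (\<lambda>y. g (\<lambda>t\<in>I. y (\<tau> t))) (\<lambda>\<omega>. W (\<omega> \<circ> \<tau>))"
  proof (rule bounded_cond_exp.relabel)
    show "(\<lambda>y. \<lambda>t\<in>I. y (\<tau> t)) \<in> PiM (\<tau> ` I) (\<lambda>_. borel) \<rightarrow>\<^sub>M PiM I (\<lambda>_. borel :: real measure)"
      by (intro measurable_restrict measurable_component_singleton) auto
    show "(\<lambda>y. \<lambda>c\<in>\<tau> ` I. y (the_inv_into I \<tau> c)) \<in> PiM I (\<lambda>_. borel) \<rightarrow>\<^sub>M PiM (\<tau> ` I) (\<lambda>_. borel :: real measure)"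
      using \<tau> by (intro measurable_restrict measurable_component_singleton)
        (auto simp: the_inv_into_f_f inj_on_subset)
    show "restrict \<omega> (\<tau> ` I) = (\<lambda>c\<in>\<tau> ` I. restrict (\<omega> \<circ> \<tau>) I (the_inv_into I \<tau> c))" for \<omega> :: "nat \<Rightarrow> real"
      using inj_on_subset[OF \<tau> subset_UNIV] by (intro ext) (auto simp: the_inv_into_f_f)
    show "restrict (\<omega> \<circ> \<tau>) I = (\<lambda>t\<in>I. restrict \<omega> (\<tau> ` I) (\<tau> t))" for \<omega> :: "nat \<Rightarrow> real"
      by auto
  qed
  then show ?thesis
    using is_cond_exp_iff_bounded_cond_exp W_range by simp
qed

lemma integral_indicator_le_exchange:
  fixes I :: "nat set"
  assumes B: "B \<in> sets (PiM I (\<lambda>_. borel))" and "a \<notin> I" "c \<notin> I" "t \<noteq> a" "t \<noteq> c"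
  shows "(\<integral>\<omega>. indicator B (restrict \<omega> I) * indicator {x. x \<le> \<omega> t} (\<omega> a) \<partial>iid_mixture)
    = (\<integral>\<omega>. indicator B (restrict \<omega> I) * indicator {x. x \<le> \<omega> t} (\<omega> c) \<partial>iid_mixture :: real)"
proof -
  let ?\<sigma> = "Transposition.transpose a c"
  define F :: "(nat \<Rightarrow> real) \<Rightarrow> real"
    where "F \<omega> = indicator B (restrict \<omega> I) * indicator {x. x \<le> \<omega> t} (\<omega> a)" for \<omega> :: "nat \<Rightarrow> real"
  have [measurable]: "F \<in> borel_measurable (PiM UNIV (\<lambda>_. borel))"
    unfolding F_def using B by measurable
  have "restrict (\<lambda>j. \<omega> (?\<sigma> j)) I = restrict \<omega> I" for \<omega> :: "nat \<Rightarrow> real"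
    using assms(2,3) by (intro ext) (auto simp: Transposition.transpose_def)
  then have swap: "(\<lambda>\<omega>. F (\<omega> \<circ> ?\<sigma>)) = (\<lambda>\<omega>. indicator B (restrict \<omega> I) * indicator {x. x \<le> \<omega> t} (\<omega> c))"
    unfolding F_def comp_def using assms(4,5) by (simp add: Transposition.transpose_def)
  have "(\<integral>\<omega>. F (\<omega> \<circ> ?\<sigma>) \<partial>iid_mixture) = (\<integral>\<omega>. F \<omega> \<partial>iid_mixture)"
    by (rule integral_iid_mixture_reindex[OF inj_transpose]) measurable
  then show ?thesis
    unfolding swap unfolding F_def by (rule sym)
qed

text \<open>The points of zs are exchangeable given the coordinates in I and t, so the empirical
  distribution function of zs at t and the indicator of its first point have the same
  conditional expectation.\<close>
lemma is_cond_exp_ecdf_imp_indicator: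
  assumes ce: "is_cond_exp Q I g (\<lambda>\<omega>. ecdf (map \<omega> zs) (\<omega> t))"
    and zs: "zs \<noteq> []" "set zs \<inter> I = {}" "t \<notin> set zs"
  shows "is_cond_exp Q I g (\<lambda>\<omega>. indicator {x. x \<le> \<omega> t} (\<omega> (hd zs)))"
proof -
  interpret bounded_cond_exp iid_mixture "\<lambda>\<omega>. restrict \<omega> I" "PiM I (\<lambda>_. borel)" g "\<lambda>\<omega>. ecdf (map \<omega> zs) (\<omega> t)"
    using ce is_cond_exp_iff_bounded_cond_exp ecdf_range by simp
  have [measurable]: "(\<lambda>\<omega>::nat \<Rightarrow> real. indicator {x. x \<le> \<omega> t} (\<omega> (hd zs)) :: real) \<in> borel_measurable (PiM UNIV (\<lambda>_. borel))"
    by measurable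
  have range: "(indicator {x. x \<le> \<omega> t} (\<omega> (hd zs)) :: real) \<in> {0..1}" for \<omega> :: "nat \<Rightarrow> real"
    by (simp add: indicator_def)
  have "bounded_cond_exp iid_mixture (\<lambda>\<omega>. restrict \<omega> I) (PiM I (\<lambda>_. borel)) g
      (\<lambda>\<omega>. indicator {x. x \<le> \<omega> t} (\<omega> (hd zs)) :: real)"
  proof (rule same_integrals)
    show "(\<lambda>\<omega>. indicator {x. x \<le> \<omega> t} (\<omega> (hd zs)) :: real) \<in> borel_measurable iid_mixture"
      by measurable
    show "(indicator {x. x \<le> \<omega> t} (\<omega> (hd zs)) :: real) \<in> {0..1}" for \<omega> :: "nat \<Rightarrow> real"
      by (rule range)
    fix B assume B [measurable]: "B \<in> sets (PiM I (\<lambda>_. borel :: real measure))"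
    let ?F = "\<lambda>a \<omega>. indicator B (restrict \<omega> I) * indicator {x. x \<le> \<omega> t} (\<omega> a) :: real"
    have "integrable iid_mixture (?F a)" for a
      by (intro integrable_iid_mixture[where c=1]) (measurable, simp add: indicator_def)
    have "(\<integral>\<omega>. indicator B (restrict \<omega> I) * ecdf (map \<omega> zs) (\<omega> t) \<partial>iid_mixture)
        = (\<integral>\<omega>. (\<Sum>s<length zs. ?F (zs ! s) \<omega>) / length zs \<partial>iid_mixture)"
      by (simp only: ecdf_map times_divide_eq_right sum_distrib_left)
    also have "\<dots> = (\<Sum>s<length zs. \<integral>\<omega>. ?F (zs ! s) \<omega> \<partial>iid_mixture) / length zs"
      using \<open>integrable iid_mixture (?F _)\<close> by (simp only: integral_divide_zero Bochner_Integration.integral_sum)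
    also have "\<dots> = (\<Sum>s<length zs. \<integral>\<omega>. ?F (hd zs) \<omega> \<partial>iid_mixture) / length zs"
      using zs nth_mem[of _ zs] by (intro arg_cong2[where f="(/)"] sum.cong refl integral_indicator_le_exchange[OF B])
        (auto simp: hd_conv_nth disjoint_iff)
    finally show "(\<integral>\<omega>. indicator B (restrict \<omega> I) * ecdf (map \<omega> zs) (\<omega> t) \<partial>iid_mixture)
        = (\<integral>\<omega>. ?F (hd zs) \<omega> \<partial>iid_mixture)"
      using zs(1) by simp
  qed
  then show ?thesis
    using is_cond_exp_iff_bounded_cond_exp range by simp
qed

lemma cond_exp_error_finer:
  assumes ce: "is_cond_exp Q J g W" and ce': "is_cond_exp Q J' g' W" and "J \<subseteq> J'"
    and [measurable]: "W \<in> borel_measurable (PiM UNIV (\<lambda>_. borel))" and W_range: "\<And>\<omega>. W \<omega> \<in> {0..1}"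
  shows "(\<integral>\<omega>. (g (restrict \<omega> J) - W \<omega>)\<^sup>2 \<partial>iid_mixture) = (\<integral>\<omega>. (g' (restrict \<omega> J') - W \<omega>)\<^sup>2 \<partial>iid_mixture)
    + (\<integral>\<omega>. (g (restrict \<omega> J) - g' (restrict \<omega> J'))\<^sup>2 \<partial>iid_mixture)"
proof -
  interpret bounded_cond_exp iid_mixture "\<lambda>\<omega>. restrict \<omega> J'" "PiM J' (\<lambda>_. borel)" g' W
    using ce' is_cond_exp_iff_bounded_cond_exp W_range by simp
  have "g \<in> borel_measurable (PiM J (\<lambda>_. borel))" and g_range: "\<And>y. g y \<in> {0..1}"
    using ce unfolding is_cond_exp_def by auto
  then have "(\<lambda>y. g (restrict y J)) \<in> borel_measurable (PiM J' (\<lambda>_. borel))"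
    using measurable_restrict_subset[OF \<open>J \<subseteq> J'\<close>] by measurable
  from pythagoras[OF this g_range] show ?thesis
    using \<open>J \<subseteq> J'\<close> by (simp add: Int_absorb1)
qed

lemma AE_eq_if_integral_square_diff_eq_0:
  fixes F G :: "('i \<Rightarrow> real) \<Rightarrow> real"
  assumes [measurable]: "F \<in> borel_measurable (PiM UNIV (\<lambda>_. borel))" "G \<in> borel_measurable (PiM UNIV (\<lambda>_. borel))"
    and range: "\<And>\<omega>. F \<omega> \<in> {0..1}" "\<And>\<omega>. G \<omega> \<in> {0..1}"
    and zero: "(\<integral>\<omega>. (F \<omega> - G \<omega>)\<^sup>2 \<partial>iid_mixture) = 0"
  shows "AE D in Q. AE \<omega> in PiM UNIV (\<lambda>_. D). F \<omega> = G \<omega>"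
proof -
  have "integrable iid_mixture (\<lambda>\<omega>. (F \<omega> - G \<omega>)\<^sup>2)"
    using abs_square_diff_le_one[OF range] by (intro integrable_iid_mixture[where c=1]) measurable
  then have "AE \<omega> in iid_mixture. (F \<omega> - G \<omega>)\<^sup>2 = 0"
    using zero by (subst integral_nonneg_eq_0_iff_AE[symmetric]) auto
  moreover have "Measurable.pred (PiM UNIV (\<lambda>_. borel)) (\<lambda>\<omega>. F \<omega> = G \<omega>)"
    unfolding Measurable.pred_def by measurable
  ultimately show ?thesis
    by (subst AE_iid_mixture[symmetric]) auto
qed

section \<open>The expected loss\<close>

lemma exp_loss_eq_canonical:
  assumes h: "valid_h Q h" and i: "i < m" and N: "(\<Sum>j\<in>{..<m} - {i}. n j) = Suc r" and r: "r \<ge> 1"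
    and f: "f \<in> list_borel \<rightarrow>\<^sub>M list_borel"
  shows "exp_loss Q h m n ((\<lambda>_. id)(i := f)) i = (\<integral>x. canonical_loss h f (n i) r x \<partial>iid_mixture)"
proof -
  have len: "length (pooled_indices m n i) = Suc r"
    using N by (simp add: length_pooled_indices)
  show ?thesis
    unfolding exp_loss_def fun_upd_same loss_given_pooled_layout[OF len]
    using inj_pooled_layout[OF i] len canonical_loss_bounded[OF h r]
    by (intro integral_mean_reindex measurable_canonical_loss[OF h r f]) auto
qed

lemma exp_loss_truthful:
  assumes "valid_h Q h" "i < m" "(\<Sum>j\<in>{..<m} - {i}. n j) = Suc r" "r \<ge> 1"
  shows "exp_loss Q h m n (\<lambda>_. id) i = (\<integral>x. canonical_loss h id (n i) r x \<partial>iid_mixture)"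
proof -
  have "(\<lambda>_. id)(i := id) = (\<lambda>_::nat. id :: real list \<Rightarrow> real list)"
    by (rule ext) simp
  then show ?thesis
    using exp_loss_eq_canonical[OF assms measurable_ident] by simp
qed

lemma truthful_optimal:
  assumes h: "valid_h Q h" and i: "i < m" and N: "(\<Sum>j\<in>{..<m} - {i}. n j) \<ge> 2"
    and f: "f \<in> list_borel \<rightarrow>\<^sub>M list_borel"
  shows "exp_loss Q h m n (\<lambda>_. id) i \<le> exp_loss Q h m n ((\<lambda>_. id)(i := f)) i"
proof -
  define k where "k = n i"
  define r where "r = (\<Sum>j\<in>{..<m} - {i}. n j) - 1"
  have N': "(\<Sum>j\<in>{..<m} - {i}. n j) = Suc r" and r: "r \<ge> 1"
    using N by (simp_all add: r_def)
  define W where "W x = ecdf (map x [Suc k..<Suc k + r]) (x k)" for x :: "nat \<Rightarrow> real"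
  define g where "g x = h k r (map x [0..<Suc k])" for x :: "nat \<Rightarrow> real"
  define \<gamma> where "\<gamma> x = h (length (f (map x [0..<k]))) r (f (map x [0..<k]) @ [x k])" for x :: "nat \<Rightarrow> real"
  have [measurable]: "W \<in> borel_measurable (PiM UNIV (\<lambda>_. borel))"
    unfolding W_def by measurable
  have "is_cond_exp Q {..k} g W"
    using h r unfolding valid_h_def g_def W_def by blast
  then interpret bounded_cond_exp iid_mixture "\<lambda>x. restrict x {..k}" "PiM {..k} (\<lambda>_. borel)" g W
    using is_cond_exp_iff_bounded_cond_exp ecdf_range unfolding W_def by simp
  have \<gamma>_measurable: "\<gamma> \<in> borel_measurable (PiM {..k} (\<lambda>_. borel))"
    unfolding \<gamma>_def using h r f by (rule measurable_h_snoc) simp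
  have \<gamma>_range: "\<gamma> x \<in> {0..1}" for x
    unfolding \<gamma>_def using h r by (rule valid_h_range) simp
  have "exp_loss Q h m n (\<lambda>_. id) i = (\<integral>x. (g (restrict x {..k}) - W x)\<^sup>2 \<partial>iid_mixture)"
    using exp_loss_truthful[OF h i N' r] unfolding canonical_loss_def k_def g_def W_def
    by (simp add: map_restrict_upt)
  moreover have "exp_loss Q h m n ((\<lambda>_. id)(i := f)) i = (\<integral>x. (\<gamma> (restrict x {..k}) - W x)\<^sup>2 \<partial>iid_mixture)"
    using exp_loss_eq_canonical[OF h i N' r f] unfolding canonical_loss_def k_def \<gamma>_def W_def
    by (simp add: map_restrict_upt del: upt_Suc)
  ultimately show ?thesis
    using pythagoras[OF \<gamma>_measurable \<gamma>_range] by (simp add: integral_nonneg_AE)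
qed

lemma is_cond_exp_common_layout:
  assumes h: "valid_h Q h" and r: "r \<ge> 1" and "k \<le> b"
  shows "is_cond_exp Q (insert 0 {2..<k + 2}) (\<lambda>y. h k r (map (\<lambda>t. y (common_layout b k t)) [0..<Suc k]))
    (\<lambda>\<omega>. ecdf (map \<omega> (1 # [b + 2..<b + r + 1])) (\<omega> 0))"
proof -
  have "is_cond_exp Q {..k} (\<lambda>x. h k r (map x [0..<Suc k])) (\<lambda>\<omega>. ecdf (map \<omega> [Suc k..<Suc k + r]) (\<omega> k))"
    using h r unfolding valid_h_def by blast
  moreover have "(\<lambda>\<omega>. ecdf (map \<omega> [Suc k..<Suc k + r]) (\<omega> k)) \<in> borel_measurable (PiM UNIV (\<lambda>_. borel))"
    by measurable
  ultimately have "is_cond_exp Q (common_layout b k ` {..k})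
      (\<lambda>y. h k r (map (\<lambda>t\<in>{..k}. y (common_layout b k t)) [0..<Suc k]))
      (\<lambda>\<omega>. ecdf (map (\<omega> \<circ> common_layout b k) [Suc k..<Suc k + r]) ((\<omega> \<circ> common_layout b k) k))"
    by (rule is_cond_exp_reindex[OF _ inj_common_layout[OF \<open>k \<le> b\<close>] _ ecdf_range])
  moreover have "(\<lambda>y. h k r (map (\<lambda>t\<in>{..k}. y (common_layout b k t)) [0..<Suc k]))
      = (\<lambda>y. h k r (map (\<lambda>t. y (common_layout b k t)) [0..<Suc k]))"
    by (intro ext arg_cong[where f="h k r"] map_cong) auto
  ultimately show ?thesis
    unfolding common_layout_image ecdf_common_layout[OF r] by simp
qed

lemma exp_loss_truthful_common_layout:
  assumes h: "valid_h Q h" and i: "i < m" and N: "(\<Sum>j\<in>{..<m} - {i}. n j) = Suc r" and r: "r \<ge> 1"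
    and "k \<le> b"
  shows "exp_loss Q h m (n(i := k)) (\<lambda>_. id) i = (\<integral>\<omega>.
    (h k r (map (\<lambda>t. \<omega> (common_layout b k t)) [0..<Suc k]) - ecdf (map \<omega> (1 # [b + 2..<b + r + 1])) (\<omega> 0))\<^sup>2
    \<partial>iid_mixture)"
proof -
  have "(\<Sum>j\<in>{..<m} - {i}. (n(i := k)) j) = (\<Sum>j\<in>{..<m} - {i}. n j)"
    by (rule sum.cong) auto
  then have "(\<Sum>j\<in>{..<m} - {i}. (n(i := k)) j) = Suc r"
    using N by simp
  from exp_loss_truthful[of h i m "n(i := k)" r, OF h i this r]
  have "exp_loss Q h m (n(i := k)) (\<lambda>_. id) i = (\<integral>\<omega>. canonical_loss h id k r \<omega> \<partial>iid_mixture)"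
    by simp
  also have "\<dots> = (\<integral>\<omega>. canonical_loss h id k r (\<omega> \<circ> common_layout b k) \<partial>iid_mixture)"
    using measurable_canonical_loss[OF h r measurable_ident]
    by (rule integral_iid_mixture_reindex[OF inj_common_layout[OF \<open>k \<le> b\<close>], symmetric])
  also have "\<dots> = (\<integral>\<omega>. (h k r (map (\<lambda>t. \<omega> (common_layout b k t)) [0..<Suc k])
      - ecdf (map \<omega> (1 # [b + 2..<b + r + 1])) (\<omega> 0))\<^sup>2 \<partial>iid_mixture)"
    unfolding canonical_loss_def ecdf_common_layout[OF r]
    by (simp add: comp_def upt_Suc_append del: upt_Suc)
  finally show ?thesis .
qed

lemma not_degenerate_imp_gap:
  assumes "\<not> degenerate Q"
    and ce: "is_cond_exp Q (insert 0 {2..<a + 2}) g\<^sub>1 (\<lambda>\<omega>. ecdf (map \<omega> zs) (\<omega> 0))"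
      "is_cond_exp Q (insert 0 {2..<a + 3}) g\<^sub>2 (\<lambda>\<omega>. ecdf (map \<omega> zs) (\<omega> 0))"
    and zs: "zs \<noteq> []" "hd zs = 1" "set zs \<inter> {2..<a + 3} = {}" "0 \<notin> set zs"
  shows "(\<integral>\<omega>. (g\<^sub>1 (restrict \<omega> (insert 0 {2..<a + 2})) - g\<^sub>2 (restrict \<omega> (insert 0 {2..<a + 3})))\<^sup>2
    \<partial>iid_mixture) > 0" (is "?gap > 0")
proof (rule ccontr)
  assume "\<not> ?gap > 0"
  moreover have "?gap \<ge> 0"
    by (rule integral_nonneg_AE) simp
  ultimately have "?gap = 0"
    by linarith
  moreover have [measurable]: "(\<lambda>\<omega>. g\<^sub>1 (restrict \<omega> (insert 0 {2..<a + 2}))) \<in> borel_measurable (PiM UNIV (\<lambda>_. borel))"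
    "(\<lambda>\<omega>. g\<^sub>2 (restrict \<omega> (insert 0 {2..<a + 3}))) \<in> borel_measurable (PiM UNIV (\<lambda>_. borel))"
    and "g\<^sub>1 y \<in> {0..1}" "g\<^sub>2 y \<in> {0..1}" for y
    using ce unfolding is_cond_exp_def by auto
  ultimately have "AE D in Q. AE \<omega> in PiM UNIV (\<lambda>_. D).
      g\<^sub>1 (restrict \<omega> (insert 0 {2..<a + 2})) = g\<^sub>2 (restrict \<omega> (insert 0 {2..<a + 3}))"
    by (intro AE_eq_if_integral_square_diff_eq_0) (simp_all del: upt_Suc)
  moreover have "set zs \<inter> insert 0 {2..<a + 2} = {}" "set zs \<inter> insert 0 {2..<a + 3} = {}"
    using zs(3,4) by auto
  then have "is_cond_exp Q (insert 0 {2..<a + 2}) g\<^sub>1 (\<lambda>\<omega>. indicator {x. x \<le> \<omega> 0} (\<omega> 1))"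
    "is_cond_exp Q (insert 0 {2..<a + 3}) g\<^sub>2 (\<lambda>\<omega>. indicator {x. x \<le> \<omega> 0} (\<omega> 1))"
    using is_cond_exp_ecdf_imp_indicator[OF ce(1) zs(1)] is_cond_exp_ecdf_imp_indicator[OF ce(2) zs(1)] zs(2,4)
    by simp_all
  ultimately have "degenerate Q"
    unfolding degenerate_def by blast
  with \<open>\<not> degenerate Q\<close> show False ..
qed

lemma more_data_better:
  assumes h: "valid_h Q h" and nondegenerate: "\<not> degenerate Q" and i: "i < m"
    and N: "(\<Sum>j\<in>{..<m} - {i}. n j) \<ge> 2" and "a < b"
  shows "exp_loss Q h m (n(i := b)) (\<lambda>_. id) i < exp_loss Q h m (n(i := a)) (\<lambda>_. id) i"
proof -
  define r where "r = (\<Sum>j\<in>{..<m} - {i}. n j) - 1"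
  have N': "(\<Sum>j\<in>{..<m} - {i}. n j) = Suc r" and r: "r \<ge> 1"
    using N by (simp_all add: r_def)
  define zs where "zs = 1 # [b + 2..<b + r + 1]"
  define W where "W \<omega> = ecdf (map \<omega> zs) (\<omega> 0)" for \<omega> :: "nat \<Rightarrow> real"
  define G where "G k y = h k r (map (\<lambda>t. y (common_layout b k t)) [0..<Suc k])" for k y
  define J where "J k = insert 0 {2..<k + 2}" for k :: nat
  define L where "L k = (\<integral>\<omega>. (G k (restrict \<omega> (J k)) - W \<omega>)\<^sup>2 \<partial>iid_mixture)" for k
  have W_measurable: "W \<in> borel_measurable (PiM UNIV (\<lambda>_. borel))"
    unfolding W_def by measurable
  have W_range: "W \<omega> \<in> {0..1}" for \<omega>
    unfolding W_def by (rule ecdf_range)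
  have ce: "is_cond_exp Q (J k) (G k) W" if "k \<le> b" for k
    using is_cond_exp_common_layout[OF h r that] unfolding G_def[abs_def] W_def[abs_def] J_def zs_def .
  have "G k (restrict \<omega> (J k)) = G k \<omega>" for k \<omega>
    unfolding G_def J_def common_layout_image[of b k, symmetric] by (intro arg_cong[where f="h k r"] map_cong) auto
  then have loss: "exp_loss Q h m (n(i := k)) (\<lambda>_. id) i = L k" if "k \<le> b" for k
    using exp_loss_truthful_common_layout[OF h i N' r that] unfolding L_def G_def W_def zs_def by simp
  have finer: "L k = L k' + (\<integral>\<omega>. (G k (restrict \<omega> (J k)) - G k' (restrict \<omega> (J k')))\<^sup>2 \<partial>iid_mixture)"
    if "k \<le> k'" "k' \<le> b" for k k'
    unfolding L_def using that
    by (intro cond_exp_error_finer[OF ce ce _ W_measurable W_range]) (auto simp: J_def)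
  have J_Suc: "J (Suc a) = insert 0 {2..<a + 3}"
    unfolding J_def by (simp add: numeral_3_eq_3)
  with ce[of a] ce[of "Suc a"] \<open>a < b\<close>
  have "is_cond_exp Q (insert 0 {2..<a + 2}) (G a) (\<lambda>\<omega>. ecdf (map \<omega> zs) (\<omega> 0))"
    "is_cond_exp Q (insert 0 {2..<a + 3}) (G (Suc a)) (\<lambda>\<omega>. ecdf (map \<omega> zs) (\<omega> 0))"
    unfolding J_def W_def[abs_def] by simp_all
  moreover have "zs \<noteq> []" "hd zs = 1" "set zs \<inter> {2..<a + 3} = {}" "0 \<notin> set zs"
    using \<open>a < b\<close> unfolding zs_def by auto
  ultimately have "(\<integral>\<omega>. (G a (restrict \<omega> (J a)) - G (Suc a) (restrict \<omega> (J (Suc a))))\<^sup>2 \<partial>iid_mixture) > 0"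
    unfolding J_Suc unfolding J_def by (rule not_degenerate_imp_gap[OF nondegenerate])
  moreover have "L (Suc a) \<ge> L b"
    using finer[of "Suc a" b] \<open>a < b\<close> by (simp add: integral_nonneg_AE)
  ultimately show ?thesis
    using loss[of a] loss[of b] finer[of a "Suc a"] \<open>a < b\<close> by simp
qed

end

theorem theorem1:
  fixes m :: nat and Q :: "real measure measure" and h :: "nat \<Rightarrow> nat \<Rightarrow> real list \<Rightarrow> real"
  assumes "m \<ge> 2"
    and "is_prior Q"
    and "valid_h Q h"
  shows "(\<forall>(n :: nat \<Rightarrow> nat) i (fi :: real list \<Rightarrow> real list).
            i < m \<longrightarrow> (\<Sum>j\<in>{..<m} - {i}. n j) \<ge> 2 \<longrightarrow> fi \<in> list_borel \<rightarrow>\<^sub>M list_borel \<longrightarrow>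
            exp_loss Q h m n (\<lambda>_. id) i \<le> exp_loss Q h m n ((\<lambda>_. id)(i := fi)) i)
       \<and> (\<not> degenerate Q \<longrightarrow>
          (\<forall>(n :: nat \<Rightarrow> nat) i a b.
            i < m \<longrightarrow> (\<Sum>j\<in>{..<m} - {i}. n j) \<ge> 2 \<longrightarrow> a < b \<longrightarrow>
            exp_loss Q h m (n(i := b)) (\<lambda>_. id) i < exp_loss Q h m (n(i := a)) (\<lambda>_. id) i))"
proof -
  interpret prior Q
    by (rule prior.intro) fact
  show ?thesis
    using truthful_optimal[OF \<open>valid_h Q h\<close>] more_data_better[OF \<open>valid_h Q h\<close>] by blast
qed

end
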